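(* Let $X$ be a finite alphabet, $c\geq1$, $x,y\in X$ letters and $w\in X^c$. Then the sequence $(x,y,w)$ is a code if and only if $x\neq y$ and $w\notin\{x,y\}^c$ (i.e. $w$ contains at least one letter different from both $x$ and $y$).
   Context: $X^*$ is the set of words over the finite alphabet $X$, and $\{x,y\}^c$ is the set of words of length $c$ all of whose letters lie in $\{x,y\}$. A code over $X$ is a finite sequence $C=(v_1,\ldots,v_m)$ of words over $X$ such that every $w\in X^*$ has at most one factorization into code-words: if $w=v_{i_1}\cdots v_{i_l}=v_{j_1}\cdots v_{j_{l'}}$ with $l,l'\geq1$, then $l=l'$ and $i_t=j_t$ for all $t$. (Codes are sequences, not sets.) *)

theory Defs
  imports Main
begin

definition is_code :: "'a list list \<Rightarrow> bool" where
  "is_code C \<longleftrightarrow>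
     (\<forall>is js. is \<noteq> [] \<longrightarrow> js \<noteq> [] \<longrightarrow>
        set is \<subseteq> {..<length C} \<longrightarrow> set js \<subseteq> {..<length C} \<longrightarrow>
        concat (map (\<lambda>i. C ! i) is) = concat (map (\<lambda>i. C ! i) js) \<longrightarrow> is = js)"

definition words_of_length :: "'a set \<Rightarrow> nat \<Rightarrow> 'a list set" where
  "words_of_length A c = {v. length v = c \<and> set v \<subseteq> A}"

end

theory Submission
  imports Defs
begin

text \<open>More generally, distinct single letters together with a word \<open>w\<close> containing some other
  letter form a code: only \<open>w\<close> can produce a foreign letter, so in any factorization the
  longest prefix made of the given letters ends with the fixed prefix \<open>takeWhile (\<lambda>a. a \<in> A) w\<close>
  if \<open>w\<close> occurs at all; this determines the letters before the first \<open>w\<close>, which can then be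
  cancelled. Conversely a repeated letter, or a word \<open>w \<in> {x, y}\<^sup>c\<close> spelled out by single
  letters, gives two different factorizations.\<close>

lemma is_codeD:
  assumes "is_code C" "is \<noteq> []" "js \<noteq> []"
    "set is \<subseteq> {..<length C}" "set js \<subseteq> {..<length C}"
    "concat (map ((!) C) is) = concat (map ((!) C) js)"
  shows "is = js"
  using assms unfolding is_code_def by blast

lemma takeWhile_append_all:
  "\<forall>a\<in>set u. P a \<Longrightarrow> takeWhile P (u @ v) = u @ takeWhile P v"
  by (induction u) auto

lemma append_cancel_letters_before_word:
  assumes "set u \<subseteq> A" "set u' \<subseteq> A" "\<not> set w \<subseteq> A"
    and "u @ w @ r = u' @ w @ r'"
  shows "u = u' \<and> r = r'"
proof -
  have "takeWhile (\<lambda>a. a \<in> A) (w @ s) = takeWhile (\<lambda>a. a \<in> A) w" for s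
    using assms(3) by (induction w) auto
  then have "u @ takeWhile (\<lambda>a. a \<in> A) w = u' @ takeWhile (\<lambda>a. a \<in> A) w"
    using arg_cong[OF assms(4), of "takeWhile (\<lambda>a. a \<in> A)"] assms(1,2)
    by (simp add: takeWhile_append_all subset_iff)
  with assms(4) show ?thesis by simp
qed

lemma concat_letter_code_words:
  assumes "set is \<subseteq> {..<length as}"
  shows "concat (map ((!) (map (\<lambda>a. [a]) as @ ws)) is) = map ((!) as) is"
  using assms by (induction "is") (auto simp: nth_append)

lemma map_nth_inj:
  assumes "distinct as" "set is \<subseteq> {..<length as}" "set js \<subseteq> {..<length as}"
    and "map ((!) as) is = map ((!) as) js"
  shows "is = js"
proof -
  have "inj_on ((!) as) (set is \<union> set js)"
    using assms(1-3) by (intro inj_on_nth) auto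
  with assms(4) show ?thesis
    by (simp add: inj_on_map_eq_map)
qed

lemma letters_and_word_factorization_unique:
  fixes as w :: "'a list"
  defines "C \<equiv> map (\<lambda>a. [a]) as @ [w]"
  assumes "distinct as" and w_not_letters: "\<not> set w \<subseteq> set as"
    and "set is \<subseteq> {..<Suc (length as)}" "set js \<subseteq> {..<Suc (length as)}"
    and "concat (map ((!) C) is) = concat (map ((!) C) js)"
  shows "is = js"
  using assms(4-6)
proof (induction "is" arbitrary: js rule: length_induct)
  case (1 "is")
  let ?k = "length as"
  have no_word: "concat (map ((!) C) b) = map ((!) as) b" "set b \<subseteq> {..<?k}"
    if "set b \<subseteq> {..<Suc ?k}" "?k \<notin> set b" for b
  proof -
    show bound: "set b \<subseteq> {..<?k}"
      using that by (auto simp: less_Suc_eq)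
    show "concat (map ((!) C) b) = map ((!) as) b"
      unfolding C_def using concat_letter_code_words[OF bound] .
  qed
  have Ck: "C ! ?k = w"
    by (simp add: C_def nth_append)
  have with_word: "concat (map ((!) C) b) \<noteq> concat (map ((!) C) b')"
    if word: "?k \<in> set b" and letters: "set b' \<subseteq> {..<Suc ?k}" "?k \<notin> set b'" for b b'
  proof -
    obtain a t where "b = a @ ?k # t"
      using split_list_first[OF word] by blast
    then have "\<not> set (concat (map ((!) C) b)) \<subseteq> set as"
      using w_not_letters Ck by auto
    moreover have "set (concat (map ((!) C) b')) \<subseteq> set as"
      using no_word[OF letters] by auto
    ultimately show ?thesis
      by metis
  qed
  consider "?k \<notin> set is" "?k \<notin> set js" | "?k \<in> set is" "?k \<notin> set js"
    | "?k \<notin> set is" "?k \<in> set js" | "?k \<in> set is" "?k \<in> set js"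
    by blast
  then show ?case
  proof cases
    case 1
    then show ?thesis
      using "1.prems" no_word map_nth_inj[OF assms(2)] by simp
  next
    case 2
    then show ?thesis
      using "1.prems" with_word by blast
  next
    case 3
    then show ?thesis
      using "1.prems" with_word by metis
  next
    case 4
    then obtain a t a' t' where split: "is = a @ ?k # t" "?k \<notin> set a" "js = a' @ ?k # t'" "?k \<notin> set a'"
      using split_list_first by metis
    have blocks: "set a \<subseteq> {..<?k}" "set a' \<subseteq> {..<?k}"
      using "1.prems" split no_word(2) by auto
    have letters_in: "set (map ((!) as) b) \<subseteq> set as" if "set b \<subseteq> {..<?k}" for b
      using that by auto
    have "map ((!) as) a @ w @ concat (map ((!) C) t)
        = map ((!) as) a' @ w @ concat (map ((!) C) t')"
      using "1.prems" split no_word(1) Ck by simp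
    then have "map ((!) as) a = map ((!) as) a'"
      and tails: "concat (map ((!) C) t) = concat (map ((!) C) t')"
      using append_cancel_letters_before_word[OF letters_in letters_in w_not_letters] blocks
      by blast+
    then have "a = a'"
      using map_nth_inj[OF assms(2) blocks] by blast
    moreover have "t = t'"
      using "1.IH" tails "1.prems" split by auto
    ultimately show ?thesis
      using split by simp
  qed
qed

lemma is_code_letters_and_word:
  assumes "distinct as" and "z \<in> set w" and "z \<notin> set as"
  shows "is_code (map (\<lambda>a. [a]) as @ [w])"
  unfolding is_code_def
  using letters_and_word_factorization_unique[OF assms(1), of w] assms(2,3) by auto

lemma concat_letter_indices:
  assumes "set v \<subseteq> {x, y}"
  shows "concat (map ((!) [[x], [y], w]) (map (\<lambda>a. if a = x then 0 else 1) v)) = v"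
  using assms by (induction v) auto

theorem mainTheorem7:
  fixes X :: "'a set" and c :: nat and x y :: 'a and w :: "'a list"
  assumes "finite X" and "c \<ge> 1" and "x \<in> X" and "y \<in> X"
    and "w \<in> words_of_length X c"
  shows "is_code [[x], [y], w] \<longleftrightarrow> x \<noteq> y \<and> w \<notin> words_of_length {x, y} c"
proof
  assume code: "is_code [[x], [y], w]"
  show "x \<noteq> y \<and> w \<notin> words_of_length {x, y} c"
  proof (intro conjI notI)
    assume "x = y"
    then show False
      using is_codeD[OF code, of "[0]" "[1]"] by simp
  next
    assume "w \<in> words_of_length {x, y} c"
    then have w: "set w \<subseteq> {x, y}" "w \<noteq> []"
      using assms(2) by (auto simp: words_of_length_def)
    let ?js = "map (\<lambda>a. if a = x then 0 else 1) w :: nat list"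
    have "[2] = ?js"
      using is_codeD[OF code, of "[2]" ?js] concat_letter_indices[OF w(1)] w(2) by auto
    then show False
      by (cases w) (auto split: if_splits)
  qed
next
  assume "x \<noteq> y \<and> w \<notin> words_of_length {x, y} c"
  then obtain z where "x \<noteq> y" "z \<in> set w" "z \<notin> {x, y}"
    using assms(5) by (auto simp: words_of_length_def)
  then show "is_code [[x], [y], w]"
    using is_code_letters_and_word[of "[x, y]" z w] by simp
qed

end
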